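(* Suppose A1–A3 hold and let $\{x_k\}$ be generated by Algorithm 1 with the Metropolis-based choice $$\nu_{k,l}=\sigma\exp\!\Big(-\max\{\theta,\ f(x_k+\alpha_k\beta^l d_k)-f(x_k)\}\,\ln(k+1)\Big)$$ for constants $\sigma>0$, $\theta>1$. Let $\epsilon>0$. If $T$ is a positive integer with $$T\ge 2\max\left\{\sigma\sum_{k=0}^{\infty}\frac{1}{(k+1)^\theta},\ f(x_0)-f_{low}\right\}\kappa_c^{-1}\epsilon^{-2},$$ then $\min_{k=0,\dots,T-1}\|\nabla f(x_k)\|\le\epsilon$.
   Context: Let $(X,\langle\cdot,\cdot\rangle)$ be a real Hilbert space with induced norm $\|\cdot\|$, and $f:X\to\mathbb{R}$ Fréchet differentiable with gradient $\nabla f$. Algorithm 1 (general non-monotone descent algorithm): parameters $x_0\in X$, $\alpha_0>0$, $\beta,\rho\in(0,1)$. For $k=0,1,2,\dots$: choose $d_k\in X$ with $\langle\nabla f(x_k),d_k\rangle<0$; then for $l=0,1,2,\dots$ choose a number $\nu_{k,l}\ge 0$ and test $$f(x_k+\alpha_k\beta^l d_k)\le f(x_k)+\rho\alpha_k\beta^l\langle\nabla f(x_k),d_k\rangle+\nu_{k,l};$$ let $l_k$ be the first $l$ for which this holds, set $\nu_k:=\nu_{k,l_k}$, $x_{k+1}=x_k+\alpha_k\beta^{l_k}d_k$ and $\alpha_{k+1}=\alpha_k\beta^{l_k-1}$. It is assumed the algorithm generates infinite sequences (all $l_k$ finite). Assumptions: A1: $\nabla f$ is Lipschitz continuous with constant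 $L>0$. A2: there is $f_{low}\in\mathbb{R}$ with $f(x)\ge f_{low}$ for all $x\in X$. A3: there are constants $c_1,c_2>0$ with $\langle\nabla f(x_k),d_k\rangle\le -c_1\|\nabla f(x_k)\|^2$ and $\|d_k\|\le c_2\|\nabla f(x_k)\|$ for all $k$. Constant: $\kappa_c=\min\left\{\rho\beta\alpha_0c_1,\ \frac{2\beta\rho(1-\rho)c_1^2}{Lc_2^2}\right\}$. *)

theory Defs
  imports "HOL-Analysis.Analysis"
begin

definition metropolis_nu ::
  "('a::real_normed_vector \<Rightarrow> real) \<Rightarrow> real \<Rightarrow> real \<Rightarrow> real \<Rightarrow> nat \<Rightarrow> 'a \<Rightarrow> real \<Rightarrow> 'a \<Rightarrow> nat \<Rightarrow> real"
  where "metropolis_nu f \<sigma> \<theta> \<beta> k xk \<alpha>k dk l =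
     \<sigma> * exp (- max \<theta> (f (xk + (\<alpha>k * \<beta> ^ l) *\<^sub>R dk) - f xk) * ln (real k + 1))"

definition ls_test ::
  "('a::real_inner \<Rightarrow> real) \<Rightarrow> ('a \<Rightarrow> 'a) \<Rightarrow> real \<Rightarrow> real \<Rightarrow> 'a \<Rightarrow> real \<Rightarrow> 'a \<Rightarrow> nat \<Rightarrow> real \<Rightarrow> bool"
  where "ls_test f g \<rho> \<beta> xk \<alpha>k dk l \<nu> \<longleftrightarrow>
     f (xk + (\<alpha>k * \<beta> ^ l) *\<^sub>R dk) \<le> f xk + \<rho> * \<alpha>k * \<beta> ^ l * (g xk \<bullet> dk) + \<nu>"

definition kappa_c :: "real \<Rightarrow> real \<Rightarrow> real \<Rightarrow> real \<Rightarrow> real \<Rightarrow> real \<Rightarrow> real"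
  where "kappa_c \<rho> \<beta> \<alpha>0 c1 c2 L =
     min (\<rho> * \<beta> * \<alpha>0 * c1) (2 * \<beta> * \<rho> * (1 - \<rho>) * c1\<^sup>2 / (L * c2\<^sup>2))"

end

theory Submission
  imports Defs
begin

text \<open>With \<open>\<tau> = 2 (1 - \<rho>) c1 / (L c2^2)\<close>, the descent inequality for Lipschitz gradients shows
  that every trial step of length at most \<open>\<tau>\<close> passes the Armijo test even without the
  non-monotone term. Hence a rejected trial step is longer than \<open>\<tau>\<close>, and since the step size is
  reset to the last rejected trial, every accepted step is at least \<open>\<beta> min \<alpha>0 \<tau>\<close>.
  Each iteration then decreases \<open>f\<close> by at least \<open>\<kappa>_c |\<nabla>f(x_k)|^2\<close> up to the Metropolis
  term, which is at most \<open>\<sigma> / (k+1) powr \<theta>\<close> and thus summable because \<open>\<theta> > 1\<close>.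
  Telescoping bounds \<open>\<kappa>_c\<close> times the sum of the first \<open>T\<close> squared gradient norms by
  \<open>f(x0) - f_low + \<sigma> \<Sum>(k+1) powr -\<theta>\<close>, which is impossible if all of them exceed \<open>\<epsilon>^2\<close>
  for \<open>T\<close> as large as assumed.\<close>

lemma lipschitz_gradient_descent_inequality:
  fixes f :: "'a::real_inner \<Rightarrow> real"
  assumes grad: "\<And>y. (f has_derivative (\<lambda>h. g y \<bullet> h)) (at y)"
    and lip: "\<And>y z. norm (g y - g z) \<le> L * norm (y - z)"
    and t: "t \<ge> 0"
  shows "f (y + t *\<^sub>R h) \<le> f y + t * (g y \<bullet> h) + L / 2 * t\<^sup>2 * (norm h)\<^sup>2"
proof -
  define \<psi> where "\<psi> s = f (y + s *\<^sub>R h) - s * (g y \<bullet> h) - L / 2 * s\<^sup>2 * (norm h)\<^sup>2" for s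
  have D: "(\<psi> has_real_derivative (g (y + s *\<^sub>R h) \<bullet> h - g y \<bullet> h - L * s * (norm h)\<^sup>2)) (at s)" for s
  proof -
    have "((\<lambda>s. y + s *\<^sub>R h) has_derivative (\<lambda>u. u *\<^sub>R h)) (at s)"
      by (auto intro!: derivative_eq_intros)
    from has_derivative_compose[OF this grad]
    have "((\<lambda>s. f (y + s *\<^sub>R h)) has_real_derivative (g (y + s *\<^sub>R h) \<bullet> h)) (at s)"
      unfolding has_field_derivative_def by (simp add: mult_commute_abs)
    then show ?thesis unfolding \<psi>_def
      by (auto intro!: derivative_eq_intros simp: power2_eq_square)
  qed
  have "\<psi> t \<le> \<psi> 0"
  proof (rule DERIV_nonpos_imp_decreasing_open[OF t])
    fix s assume s: "0 < s" "s < t"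
    have "(g (y + s *\<^sub>R h) - g y) \<bullet> h \<le> norm (g (y + s *\<^sub>R h) - g y) * norm h"
      by (rule norm_cauchy_schwarz)
    also have "\<dots> \<le> L * norm (s *\<^sub>R h) * norm h"
      using lip[of "y + s *\<^sub>R h" y] by (intro mult_right_mono) auto
    also have "\<dots> = L * s * (norm h)\<^sup>2" using s by (simp add: power2_eq_square)
    finally show "\<exists>d. (\<psi> has_real_derivative d) (at s) \<and> d \<le> 0"
      using D[of s] by (auto simp: inner_diff_left)
  next
    show "continuous_on {0..t} \<psi>"
      using D by (meson DERIV_isCont continuous_at_imp_continuous_on)
  qed
  then show ?thesis unfolding \<psi>_def by simp
qed

lemma ls_test_if_step_le:
  fixes f :: "'a::real_inner \<Rightarrow> real"
  assumes grad: "\<And>y. (f has_derivative (\<lambda>h. g y \<bullet> h)) (at y)"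
    and lip: "\<And>y z. norm (g y - g z) \<le> L * norm (y - z)"
    and L: "L > 0" and c2: "c2 > 0" and \<rho>: "\<rho> \<le> 1"
    and angle: "g y \<bullet> d \<le> - c1 * (norm (g y))\<^sup>2"
    and length: "norm d \<le> c2 * norm (g y)"
    and step: "0 \<le> a * \<beta> ^ l" "a * \<beta> ^ l \<le> 2 * (1 - \<rho>) * c1 / (L * c2\<^sup>2)"
    and \<nu>: "\<nu> \<ge> 0"
  shows "ls_test f g \<rho> \<beta> y a d l \<nu>"
proof -
  define t where "t = a * \<beta> ^ l"
  define G where "G = (norm (g y))\<^sup>2"
  have "(norm d)\<^sup>2 \<le> c2\<^sup>2 * G"
    using power_mono[OF length norm_ge_zero, of 2] unfolding G_def by (simp add: power_mult_distrib)
  then have "L / 2 * t\<^sup>2 * (norm d)\<^sup>2 \<le> L / 2 * t\<^sup>2 * (c2\<^sup>2 * G)"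
    using L by (intro mult_left_mono) auto
  also have "\<dots> = t * (L * c2\<^sup>2 / 2 * G) * t" by (simp add: power2_eq_square)
  also have "\<dots> \<le> t * (L * c2\<^sup>2 / 2 * G) * (2 * (1 - \<rho>) * c1 / (L * c2\<^sup>2))"
    using step L unfolding t_def G_def by (intro mult_left_mono) auto
  also have "\<dots> = t * (1 - \<rho>) * c1 * G" using L c2 by (simp add: field_simps)
  finally have curvature: "L / 2 * t\<^sup>2 * (norm d)\<^sup>2 \<le> t * (1 - \<rho>) * c1 * G" .
  have "(1 - \<rho>) * t * (g y \<bullet> d) \<le> (1 - \<rho>) * t * (- c1 * G)"
    using angle \<rho> step unfolding t_def G_def by (intro mult_left_mono) auto
  with lipschitz_gradient_descent_inequality[OF grad lip, of t y d] curvature \<nu> step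
  have "f (y + t *\<^sub>R d) \<le> f y + \<rho> * t * (g y \<bullet> d) + \<nu>"
    unfolding t_def by (simp add: algebra_simps)
  then show ?thesis unfolding ls_test_def t_def by (simp add: mult.assoc)
qed

lemma ls_test_Least_rejected_step_gt:
  fixes f :: "'a::real_inner \<Rightarrow> real"
  assumes grad: "\<And>y. (f has_derivative (\<lambda>h. g y \<bullet> h)) (at y)"
    and lip: "\<And>y z. norm (g y - g z) \<le> L * norm (y - z)"
    and L: "L > 0" and c2: "c2 > 0" and \<rho>: "\<rho> \<le> 1"
    and angle: "g y \<bullet> d \<le> - c1 * (norm (g y))\<^sup>2"
    and length: "norm d \<le> c2 * norm (g y)"
    and a: "0 \<le> a" and \<beta>: "0 \<le> \<beta>" and \<nu>: "\<And>l. \<nu> l \<ge> 0"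
    and backtracked: "0 < (LEAST l. ls_test f g \<rho> \<beta> y a d l (\<nu> l))"
  shows "2 * (1 - \<rho>) * c1 / (L * c2\<^sup>2) < a * \<beta> ^ ((LEAST l. ls_test f g \<rho> \<beta> y a d l (\<nu> l)) - 1)"
proof (rule ccontr)
  let ?l = "(LEAST l. ls_test f g \<rho> \<beta> y a d l (\<nu> l)) - 1"
  assume "\<not> ?thesis"
  with ls_test_if_step_le[OF grad lip L c2 \<rho> angle length _ _ \<nu>] a \<beta>
  have "ls_test f g \<rho> \<beta> y a d ?l (\<nu> ?l)" by simp
  with not_less_Least[of ?l "\<lambda>l. ls_test f g \<rho> \<beta> y a d l (\<nu> l)"] backtracked show False by simp
qed

lemma ls_test_sufficient_decrease:
  assumes test: "ls_test f g \<rho> \<beta> y a d l \<nu>"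
    and \<rho>: "\<rho> \<ge> 0" and c1: "c1 \<ge> 0"
    and angle: "g y \<bullet> d \<le> - c1 * (norm (g y))\<^sup>2"
    and step: "0 \<le> t" "t \<le> a * \<beta> ^ l"
  shows "f (y + (a * \<beta> ^ l) *\<^sub>R d) \<le> f y - \<rho> * c1 * t * (norm (g y))\<^sup>2 + \<nu>"
proof -
  have "f (y + (a * \<beta> ^ l) *\<^sub>R d) \<le> f y + \<rho> * (a * \<beta> ^ l) * (g y \<bullet> d) + \<nu>"
    using test unfolding ls_test_def by (simp add: mult.assoc)
  also have "\<rho> * (a * \<beta> ^ l) * (g y \<bullet> d) \<le> \<rho> * (a * \<beta> ^ l) * (- c1 * (norm (g y))\<^sup>2)"
    using angle \<rho> step by (intro mult_left_mono) auto
  also have "\<dots> \<le> \<rho> * t * (- c1 * (norm (g y))\<^sup>2)"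
    using step \<rho> c1 by (intro mult_right_mono_neg mult_left_mono) auto
  finally show ?thesis by (simp add: mult_ac)
qed

text \<open>After a backtracking with \<open>l k > 0\<close> the new step size \<open>\<alpha> k \<beta>^(l k - 1)\<close> is the last rejected
  trial step, which exceeds \<open>\<tau>\<close>; after an immediate acceptance it grows by the factor \<open>1/\<beta>\<close>.\<close>
lemma backtracking_step_lower_bound:
  fixes \<alpha> :: "nat \<Rightarrow> real" and l :: "nat \<Rightarrow> nat"
  assumes \<beta>: "0 < \<beta>" "\<beta> < 1" and \<tau>: "0 < \<tau>" and \<alpha>0: "0 < \<alpha> 0"
    and reset: "\<And>k. \<alpha> (Suc k) = \<alpha> k * \<beta> powi (int (l k) - 1)"
    and rejected: "\<And>k. 0 < l k \<Longrightarrow> \<tau> < \<alpha> k * \<beta> ^ (l k - 1)"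
  shows "\<beta> * min (\<alpha> 0) \<tau> \<le> \<alpha> k * \<beta> ^ l k"
proof -
  define m where "m = min (\<alpha> 0) \<tau>"
  have m: "0 < m" "m \<le> \<tau>" using \<tau> \<alpha>0 unfolding m_def by auto
  have last_rejected: "\<beta> ^ l k = \<beta> ^ (l k - 1) * \<beta>" if "0 < l k" for k
    using that by (cases "l k") (auto simp: mult.commute)
  have \<alpha>_ge: "m \<le> \<alpha> k" for k
  proof (induction k)
    case 0 then show ?case unfolding m_def by simp
  next
    case (Suc k)
    show ?case
    proof (cases "l k = 0")
      case True
      then have "\<alpha> (Suc k) = \<alpha> k / \<beta>" using reset[of k] by (simp add: power_int_minus divide_inverse)
      moreover have "\<alpha> k \<le> \<alpha> k / \<beta>" using Suc m \<beta> by (simp add: le_divide_eq)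
      ultimately show ?thesis using Suc by simp
    next
      case False
      then have "int (l k) - 1 = int (l k - 1)" by simp
      then have "\<alpha> (Suc k) = \<alpha> k * \<beta> ^ (l k - 1)"
        using reset[of k] by (metis power_int_of_nat)
      then show ?thesis using rejected[of k] False m by simp
    qed
  qed
  have "\<beta> * m \<le> \<alpha> k * \<beta> ^ l k"
  proof (cases "l k = 0")
    case True
    have "\<beta> * m \<le> m" using m \<beta> by simp
    then show ?thesis using \<alpha>_ge[of k] True by simp
  next
    case False
    have "\<beta> * m \<le> \<alpha> k * \<beta> ^ (l k - 1) * \<beta>"
      using rejected[of k] False m \<beta> by (simp add: mult.commute)
    also have "\<dots> = \<alpha> k * \<beta> ^ l k" using last_rejected[of k] False by simp
    finally show ?thesis .
  qed
  then show ?thesis unfolding m_def .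
qed

lemma kappa_c_eq:
  assumes "\<rho> * \<beta> * c1 \<ge> 0" "L > 0" "c2 > 0"
  shows "kappa_c \<rho> \<beta> \<alpha>0 c1 c2 L = \<rho> * \<beta> * c1 * min \<alpha>0 (2 * (1 - \<rho>) * c1 / (L * c2\<^sup>2))"
proof -
  define \<tau> where "\<tau> = 2 * (1 - \<rho>) * c1 / (L * c2\<^sup>2)"
  have "kappa_c \<rho> \<beta> \<alpha>0 c1 c2 L = min (\<rho> * \<beta> * c1 * \<alpha>0) (\<rho> * \<beta> * c1 * \<tau>)"
    unfolding kappa_c_def \<tau>_def by (simp add: power2_eq_square mult_ac)
  also have "\<dots> = \<rho> * \<beta> * c1 * min \<alpha>0 \<tau>"
    using min_mult_distrib_left[of "\<rho> * \<beta> * c1"] assms(1) by simp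
  finally show ?thesis unfolding \<tau>_def .
qed

lemma metropolis_nu_nonneg: "\<sigma> \<ge> 0 \<Longrightarrow> metropolis_nu f \<sigma> \<theta> \<beta> k y a d l \<ge> 0"
  unfolding metropolis_nu_def by simp

lemma metropolis_nu_le:
  assumes "\<sigma> \<ge> 0"
  shows "metropolis_nu f \<sigma> \<theta> \<beta> k y a d l \<le> \<sigma> * (1 / (real k + 1) powr \<theta>)"
proof -
  have "exp (- max \<theta> (f (y + (a * \<beta> ^ l) *\<^sub>R d) - f y) * ln (real k + 1))
      \<le> exp (- \<theta> * ln (real k + 1))"
    using mult_right_mono[OF max.cobounded1, of "ln (real k + 1)"] by simp
  also have "\<dots> = 1 / (real k + 1) powr \<theta>"
    by (simp add: powr_def exp_minus field_simps)
  finally show ?thesis unfolding metropolis_nu_def using assms by (intro mult_left_mono) auto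
qed

lemma summable_one_over_Suc_powr: "\<theta> > 1 \<Longrightarrow> summable (\<lambda>k. 1 / (real k + 1) powr \<theta>)"
  using summable_real_powr_iff[of "-\<theta>"] summable_iff_shift[of "\<lambda>n. real n powr (-\<theta>)" 1]
  by (simp add: powr_minus_divide add.commute)

lemma telescoping_decrease_bound:
  fixes F G b :: "nat \<Rightarrow> real"
  assumes "\<And>k. F (Suc k) \<le> F k - \<kappa> * G k + b k"
  shows "\<kappa> * (\<Sum>k<n. G k) \<le> F 0 - F n + (\<Sum>k<n. b k)"
proof (induction n)
  case (Suc n)
  then show ?case using assms[of n] by (simp add: algebra_simps)
qed simp

lemma Min_le_of_sum_squares_bound:
  fixes a :: "nat \<Rightarrow> real"
  assumes T: "T > 0" and \<kappa>: "\<kappa> > 0" and \<epsilon>: "\<epsilon> > 0"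
    and sum: "\<kappa> * (\<Sum>k<T. (a k)\<^sup>2) \<le> C"
    and large: "real T \<ge> C / \<kappa> / \<epsilon>\<^sup>2"
  shows "Min (a ` {..<T}) \<le> \<epsilon>"
proof (rule ccontr)
  assume "\<not> ?thesis"
  then have "\<epsilon> < Min (a ` {..<T})" by simp
  then have "\<epsilon> < a k" if "k < T" for k
    using that T by (subst (asm) Min_gr_iff) auto
  then have "(\<Sum>k<T. \<epsilon>\<^sup>2) < (\<Sum>k<T. (a k)\<^sup>2)"
    using T \<epsilon> by (intro sum_strict_mono) (auto intro!: power_strict_mono)
  then have "real T * \<epsilon>\<^sup>2 < (\<Sum>k<T. (a k)\<^sup>2)" by simp
  then have "\<kappa> * (real T * \<epsilon>\<^sup>2) < C"
    using sum mult_strict_left_mono[OF _ \<kappa>] by (meson less_le_trans)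
  moreover have "C \<le> \<kappa> * (real T * \<epsilon>\<^sup>2)"
    using large \<kappa> \<epsilon> by (simp add: field_simps)
  ultimately show False by simp
qed

theorem theorem5:
  fixes f :: "'a::{real_inner, complete_space} \<Rightarrow> real"
    and g :: "'a \<Rightarrow> 'a"
    and x d :: "nat \<Rightarrow> 'a"
    and \<alpha> :: "nat \<Rightarrow> real"
    and lk :: "nat \<Rightarrow> nat"
    and x0 :: 'a
    and \<alpha>0 \<beta> \<rho> L flow c1 c2 \<sigma> \<theta> \<epsilon> :: real
    and T :: nat
  assumes grad: "\<And>y. (f has_derivative (\<lambda>h. g y \<bullet> h)) (at y)"
    and params: "\<alpha>0 > 0" "0 < \<beta>" "\<beta> < 1" "0 < \<rho>" "\<rho> < 1"
    and sig: "\<sigma> > 0" and th: "\<theta> > 1"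
    and init: "x 0 = x0" "\<alpha> 0 = \<alpha>0"
    and descent: "\<And>k. g (x k) \<bullet> d k < 0"
    and finite_ls: "\<And>k. \<exists>l. ls_test f g \<rho> \<beta> (x k) (\<alpha> k) (d k) l
                          (metropolis_nu f \<sigma> \<theta> \<beta> k (x k) (\<alpha> k) (d k) l)"
    and lk_def: "\<And>k. lk k = (LEAST l. ls_test f g \<rho> \<beta> (x k) (\<alpha> k) (d k) l
                          (metropolis_nu f \<sigma> \<theta> \<beta> k (x k) (\<alpha> k) (d k) l))"
    and x_step: "\<And>k. x (Suc k) = x k + (\<alpha> k * \<beta> ^ lk k) *\<^sub>R d k"
    and \<alpha>_step: "\<And>k. \<alpha> (Suc k) = \<alpha> k * \<beta> powi (int (lk k) - 1)"
    and A1: "L > 0" "\<And>y z. norm (g y - g z) \<le> L * norm (y - z)"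
    and A2: "\<And>y. f y \<ge> flow"
    and A3: "c1 > 0" "c2 > 0"
            "\<And>k. g (x k) \<bullet> d k \<le> - c1 * (norm (g (x k)))\<^sup>2"
            "\<And>k. norm (d k) \<le> c2 * norm (g (x k))"
    and eps: "\<epsilon> > 0"
    and T: "T > 0"
            "real T \<ge> 2 * max (\<sigma> * (\<Sum>k. 1 / (real k + 1) powr \<theta>)) (f x0 - flow)
                       / kappa_c \<rho> \<beta> \<alpha>0 c1 c2 L / \<epsilon>\<^sup>2"
  shows "Min ((\<lambda>k. norm (g (x k))) ` {..<T}) \<le> \<epsilon>"
proof -
  define \<tau> where "\<tau> = 2 * (1 - \<rho>) * c1 / (L * c2\<^sup>2)"
  define \<kappa> where "\<kappa> = kappa_c \<rho> \<beta> \<alpha>0 c1 c2 L"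
  have \<tau>_pos: "0 < \<tau>" unfolding \<tau>_def using params A1 A3 by simp
  have \<kappa>: "\<kappa> = \<rho> * \<beta> * c1 * min \<alpha>0 \<tau>" "\<kappa> > 0"
    unfolding \<kappa>_def \<tau>_def using kappa_c_eq[of \<rho> \<beta> c1 L c2 \<alpha>0] params A1 A3 by auto
  have \<alpha>_pos: "0 < \<alpha> k" for k
    by (induction k) (use init params \<alpha>_step in auto)
  have rejected: "\<tau> < \<alpha> k * \<beta> ^ (lk k - 1)" if "0 < lk k" for k
    unfolding \<tau>_def lk_def
    by (rule ls_test_Least_rejected_step_gt[OF grad A1(2) A1(1) A3(2) _ A3(3,4)])
      (use \<alpha>_pos[of k] that params sig in \<open>auto simp: lk_def intro: metropolis_nu_nonneg\<close>)
  have step: "\<beta> * min \<alpha>0 \<tau> \<le> \<alpha> k * \<beta> ^ lk k" for k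
    using backtracking_step_lower_bound[where \<alpha> = \<alpha> and l = lk,
        OF params(2,3) \<tau>_pos \<alpha>_pos \<alpha>_step rejected] init
    by simp
  have accepted: "ls_test f g \<rho> \<beta> (x k) (\<alpha> k) (d k) (lk k)
      (metropolis_nu f \<sigma> \<theta> \<beta> k (x k) (\<alpha> k) (d k) (lk k))" for k
    unfolding lk_def using finite_ls[of k] by (rule LeastI_ex)
  have decrease: "f (x (Suc k)) \<le> f (x k) - \<kappa> * (norm (g (x k)))\<^sup>2 + \<sigma> * (1 / (real k + 1) powr \<theta>)" for k
  proof -
    have "0 \<le> \<beta> * min \<alpha>0 \<tau>" using params \<tau>_pos by simp
    from ls_test_sufficient_decrease[OF accepted _ _ A3(3) this step] params A3
    have "f (x (Suc k)) \<le> f (x k) - \<kappa> * (norm (g (x k)))\<^sup>2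
        + metropolis_nu f \<sigma> \<theta> \<beta> k (x k) (\<alpha> k) (d k) (lk k)"
      unfolding x_step \<kappa>(1) by (simp add: mult_ac)
    moreover have "metropolis_nu f \<sigma> \<theta> \<beta> k (x k) (\<alpha> k) (d k) (lk k) \<le> \<sigma> * (1 / (real k + 1) powr \<theta>)"
      using sig by (intro metropolis_nu_le) simp
    ultimately show ?thesis by linarith
  qed
  define M where "M = max (\<sigma> * (\<Sum>k. 1 / (real k + 1) powr \<theta>)) (f x0 - flow)"
  have M: "\<sigma> * (\<Sum>k. 1 / (real k + 1) powr \<theta>) \<le> M" "f x0 - flow \<le> M"
    unfolding M_def by simp_all
  have "\<sigma> * (\<Sum>k<T. 1 / (real k + 1) powr \<theta>) \<le> \<sigma> * (\<Sum>k. 1 / (real k + 1) powr \<theta>)"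
    using sum_le_suminf[OF summable_one_over_Suc_powr[OF th]] sig by (intro mult_left_mono) auto
  then have "\<kappa> * (\<Sum>k<T. (norm (g (x k)))\<^sup>2) \<le> 2 * M"
    using telescoping_decrease_bound[where F = "\<lambda>k. f (x k)", OF decrease, of T] A2[of "x T"] M
    unfolding sum_distrib_left init(1) by linarith
  from Min_le_of_sum_squares_bound[OF T(1) \<kappa>(2) eps this] T(2)
  show ?thesis unfolding M_def \<kappa>_def by simp
qed

end
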